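(* Let $p$ be an odd prime, $t,l\ge1$ odd integers, $0\le a\le b$ integers, $r=p^a(p-1)+l$, $s=p^b(p-1)+l$. Fix $k$ with $0\le k\le\lfloor t/2\rfloor$ and let $x=v_p\!\left(\binom t{2k}\frac{(2k)!}{k!(-24)^k}\right)$. Then for every $n\ge0$, $$(1-p^r)\binom t{2k}\frac{n!\,S_r^{(n+1)}(2k)!}{k!(-24)^k}\equiv(1-p^s)\binom t{2k}\frac{n!\,S_s^{(n+1)}(2k)!}{k!(-24)^k}\pmod{p^{a+x+1}},$$ meaning the difference of the two rational numbers has $p$-adic valuation at least $a+x+1$.
   Context: $S_r^{(n+1)}=\frac1{n!}\sum_{j=0}^{n}\binom nj(-1)^{n+j}(j+1)^{r-1}$. $v_p$ is the $p$-adic valuation on $\mathbb Q$. *)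

theory Defs
  imports "HOL-Computational_Algebra.Computational_Algebra"
begin

definition S :: "nat \<Rightarrow> nat \<Rightarrow> rat" where
  "S r m = (let n = m - 1 in
     (1 / fact n) * (\<Sum>j = 0..n. of_nat (n choose j) * (-1) ^ (n + j) * of_nat (j + 1) ^ (r - 1)))"

text \<open>p-adic valuation of a nonzero rational (value for 0 is irrelevant; callers guard q = 0).\<close>
definition padic_val :: "nat \<Rightarrow> rat \<Rightarrow> int" where
  "padic_val p q = (case quotient_of q of (num, den) \<Rightarrow>
      int (multiplicity (int p) num) - int (multiplicity (int p) den))"

end

theory Submission
  imports Defs "HOL-Number_Theory.Number_Theory"
begin

text \<open>Since n! S_r^(n+1) is an integer combination of the powers (j+1)^(r-1), it suffices that
  m^(r-1) and m^(s-1) agree modulo p^(a+1) for every m: for p coprime to m this is Euler's theorem,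
  as s - r is a multiple of \<phi>(p^(a+1)) = p^a (p-1), and for p dividing m both sides vanish
  because the exponents exceed a. The factors 1 - p^r and 1 - p^s are 1 modulo p^(a+1) for the
  same reason, so the difference is p^(a+1) times an integer, times the common rational factor of
  valuation x.\<close>

lemma padic_val_of_int_div:
  fixes u v :: int
  assumes p: "prime p" and u: "u \<noteq> 0" and v: "v \<noteq> 0"
  shows "padic_val p (of_int u / of_int v) = int (multiplicity (int p) u) - int (multiplicity (int p) v)"
proof -
  obtain num den where q: "quotient_of (of_int u / of_int v) = (num, den)"
    by (cases "quotient_of (of_int u / of_int v)") auto
  have den: "den > 0" using quotient_of_denom_pos[OF q] .
  have "(of_int u / of_int v :: rat) = of_int num / of_int den" using quotient_of_div[OF q] .
  then have "(of_int u :: rat) * of_int den = of_int num * of_int v"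
    using v den by (simp add: field_simps)
  then have cross: "u * den = num * v" by (metis of_int_eq_iff of_int_mult)
  then have num: "num \<noteq> 0" using u den by auto
  have "prime_elem (int p)" using p by simp
  then have "multiplicity (int p) u + multiplicity (int p) den
           = multiplicity (int p) num + multiplicity (int p) v"
    using arg_cong[OF cross, of "multiplicity (int p)"] u v num den
    by (simp add: prime_elem_multiplicity_mult_distrib)
  then show ?thesis unfolding padic_val_def q by simp
qed

lemma padic_val_of_int_mult_div_ge:
  fixes u N v :: int
  assumes p: "prime p" and "u * N \<noteq> 0" and v: "v \<noteq> 0" and dvd: "int p ^ m dvd N"
  shows "padic_val p (of_int (u * N) / of_int v) \<ge> padic_val p (of_int u / of_int v) + int m"
proof -
  have u: "u \<noteq> 0" and N: "N \<noteq> 0" using assms(2) by auto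
  have "\<not> is_unit (int p)" using p by (auto dest: prime_gt_1_nat)
  then have "multiplicity (int p) N \<ge> m" using multiplicity_geI[OF N _ dvd] by blast
  moreover have "multiplicity (int p) (u * N) = multiplicity (int p) u + multiplicity (int p) N"
    using p u N by (simp add: prime_elem_multiplicity_mult_distrib)
  ultimately show ?thesis
    using padic_val_of_int_div[OF p assms(2) v] padic_val_of_int_div[OF p u v] by simp
qed

definition S_numerator :: "nat \<Rightarrow> nat \<Rightarrow> int" where
  "S_numerator r n = (\<Sum>j = 0..n. int (n choose j) * (-1) ^ (n + j) * int (j + 1) ^ (r - 1))"

lemma fact_mult_S: "fact n * S r (n + 1) = of_int (S_numerator r n)"
  unfolding S_def S_numerator_def Let_def by simp

lemma less_power_mult_pred:
  fixes p :: nat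
  assumes "p \<ge> 2"
  shows "a < p ^ a * (p - 1)"
proof -
  have "a < 2 ^ a" by (rule less_exp)
  also have "\<dots> \<le> p ^ a" using assms by (simp add: power_mono)
  also have "\<dots> \<le> p ^ a * (p - 1)" using assms by simp
  finally show ?thesis .
qed

lemma power_cong_totient_exponents:
  fixes m :: nat
  assumes p: "prime p" and ab: "a \<le> b"
  shows "[m ^ (p ^ a * (p - 1) + c) = m ^ (p ^ b * (p - 1) + c)] (mod p ^ (a + 1))"
proof -
  define e where "e = p ^ a * (p - 1)"
  have p2: "p \<ge> 2" using p prime_ge_2_nat by blast
  have ea: "a < e" unfolding e_def using less_power_mult_pred[OF p2] .
  have eb: "p ^ b * (p - 1) = e * p ^ (b - a)" unfolding e_def using ab
    by (metis le_add_diff_inverse mult.assoc mult.commute power_add)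
  have "[m ^ (e + c) = m ^ (e * p ^ (b - a) + c)] (mod p ^ (a + 1))"
  proof (cases "p dvd m")
    case True
    have vanish: "[m ^ d = 0] (mod p ^ (a + 1))" if "d \<ge> a + 1" for d
    proof -
      have "p ^ (a + 1) dvd m ^ (a + 1)" using True by (rule dvd_power_same)
      also have "\<dots> dvd m ^ d" using that by (rule le_imp_power_dvd)
      finally show ?thesis by (simp add: cong_0_iff)
    qed
    have "e \<le> e * p ^ (b - a)" using p2 by simp
    then have "[m ^ (e + c) = 0] (mod p ^ (a + 1))" "[m ^ (e * p ^ (b - a) + c) = 0] (mod p ^ (a + 1))"
      using ea by (intro vanish; linarith)+
    then show ?thesis by (rule cong_trans[OF _ cong_sym])
  next
    case False
    then have "coprime p m" using p by (simp add: prime_imp_coprime)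
    then have "coprime m (p ^ (a + 1))"
      by (simp add: coprime_commute)
    then have "[m ^ totient (p ^ (a + 1)) = 1] (mod p ^ (a + 1))" by (rule euler_theorem)
    then have me: "[m ^ e = 1] (mod p ^ (a + 1))"
      using totient_prime_power_Suc[OF p, of a] unfolding e_def by simp
    then have "[(m ^ e) ^ p ^ (b - a) = 1 ^ p ^ (b - a)] (mod p ^ (a + 1))"
      by (rule cong_pow)
    then have "[m ^ (e * p ^ (b - a)) = 1] (mod p ^ (a + 1))"
      by (simp add: power_mult)
    with me have "[m ^ e = m ^ (e * p ^ (b - a))] (mod p ^ (a + 1))"
      by (rule cong_trans[OF _ cong_sym])
    then have "[m ^ e * m ^ c = m ^ (e * p ^ (b - a)) * m ^ c] (mod p ^ (a + 1))"
      by (rule cong_mult[OF _ cong_refl])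
    then show ?thesis by (simp add: power_add)
  qed
  then show ?thesis unfolding eb by (simp add: e_def)
qed

lemma S_numerator_cong:
  assumes p: "prime p" and ab: "a \<le> b" and l: "l \<ge> 1"
  shows "[S_numerator (p ^ a * (p - 1) + l) n = S_numerator (p ^ b * (p - 1) + l) n]
           (mod int p ^ (a + 1))"
  unfolding S_numerator_def
proof (intro cong_sum cong_mult cong_refl)
  fix j
  have "[(j + 1) ^ (p ^ a * (p - 1) + (l - 1)) = (j + 1) ^ (p ^ b * (p - 1) + (l - 1))]
          (mod p ^ (a + 1))"
    by (rule power_cong_totient_exponents[OF p ab])
  then show "[int (j + 1) ^ (p ^ a * (p - 1) + l - 1) = int (j + 1) ^ (p ^ b * (p - 1) + l - 1)]
               (mod int p ^ (a + 1))"
    using l by (simp flip: cong_int_iff add: of_nat_power)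
qed

lemma S_numerator_Euler_factor_diff_dvd:
  assumes p: "prime p" and ab: "a \<le> b" and l: "l \<ge> 1"
    and r: "r = p ^ a * (p - 1) + l" and s: "s = p ^ b * (p - 1) + l"
  shows "int p ^ (a + 1) dvd (1 - int p ^ r) * S_numerator r n - (1 - int p ^ s) * S_numerator s n"
proof -
  have p2: "p \<ge> 2" using p prime_ge_2_nat by blast
  have "p ^ a * (p - 1) \<le> p ^ b * (p - 1)" using p2 ab by (simp add: power_increasing)
  then have "a + 1 \<le> r" "a + 1 \<le> s" using less_power_mult_pred[OF p2, of a] r s by linarith+
  then have "int p ^ (a + 1) dvd int p ^ r" "int p ^ (a + 1) dvd int p ^ s"
    by (metis le_imp_power_dvd)+
  moreover have "int p ^ (a + 1) dvd S_numerator r n - S_numerator s n"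
    using S_numerator_cong[OF p ab l, of n] r s by (simp add: cong_iff_dvd_diff)
  moreover have "(1 - int p ^ r) * S_numerator r n - (1 - int p ^ s) * S_numerator s n
      = (S_numerator r n - S_numerator s n) - int p ^ r * S_numerator r n + int p ^ s * S_numerator s n"
    by (simp add: algebra_simps)
  ultimately show ?thesis by (metis dvd_add dvd_diff dvd_mult2)
qed

theorem mainTheorem7:
  fixes p t l a b k n :: nat
  assumes "prime p" and "odd p"
    and "odd t" and "odd l"
    and "a \<le> b"
    and "k \<le> t div 2"
  defines "r \<equiv> p ^ a * (p - 1) + l"
    and "s \<equiv> p ^ b * (p - 1) + l"
  defines "x \<equiv> padic_val p (of_nat (t choose (2 * k)) * fact (2 * k) / (fact k * (-24) ^ k))"
  shows "let d = (1 - of_nat p ^ r) * of_nat (t choose (2 * k)) * (fact n * S r (n + 1) * fact (2 * k)) / (fact k * (-24) ^ k)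
               - (1 - of_nat p ^ s) * of_nat (t choose (2 * k)) * (fact n * S s (n + 1) * fact (2 * k)) / (fact k * (-24) ^ k)
         in d = 0 \<or> padic_val p d \<ge> int a + x + 1"
proof -
  define N :: int where "N = (1 - int p ^ r) * S_numerator r n - (1 - int p ^ s) * S_numerator s n"
  define u :: int where "u = int (t choose (2 * k)) * fact (2 * k)"
  define v :: int where "v = fact k * (-24) ^ k"
  have "l \<ge> 1" using \<open>odd l\<close> by (cases l) auto
  then have N_dvd: "int p ^ (a + 1) dvd N"
    unfolding N_def using S_numerator_Euler_factor_diff_dvd[OF \<open>prime p\<close> \<open>a \<le> b\<close>] r_def s_def
    by blast
  have v: "v \<noteq> 0" unfolding v_def by simp
  have x: "x = padic_val p (of_int u / of_int v)" unfolding x_def u_def v_def by simp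
  have d: "(1 - of_nat p ^ r) * of_nat (t choose (2 * k)) * (fact n * S r (n + 1) * fact (2 * k)) / (fact k * (-24) ^ k)
         - (1 - of_nat p ^ s) * of_nat (t choose (2 * k)) * (fact n * S s (n + 1) * fact (2 * k)) / (fact k * (-24) ^ k)
         = (of_int (u * N) / of_int v :: rat)"
    unfolding fact_mult_S N_def u_def v_def by (simp add: field_simps)
  have "u * N \<noteq> 0 \<Longrightarrow> padic_val p (of_int (u * N) / of_int v) \<ge> int a + x + 1"
    using padic_val_of_int_mult_div_ge[OF \<open>prime p\<close> _ v N_dvd] x by fastforce
  then show ?thesis unfolding Let_def d using v by auto
qed

end
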